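(* Let $C$ be the constant of Assumption 2, let $T\ge 320^{5/4}C^5$, and set the tuning parameter of the two-stage adaptive Neyman allocation algorithm (described in the context) to $\beta=4C^2(\log T)^{1/2}$. Then the algorithm is feasible under $\beta$ (i.e. $\beta\sqrt T\le T$). Furthermore, letting $(T(1),T(0))$ be the total numbers of treated and control subjects assigned by the algorithm, under Assumption 2, $$\sup_{\sigma(1),\sigma(0)}\frac{\mathrm E[V(T(1),T(0))]}{V(T^*(1),T^*(0))}<1+5C^2T^{-1/2}(\log T)^{1/2}.$$
   Context: Setup. There are $T$ subjects and two treatments, $1$ (treatment) and $0$ (control). Subject $t$ has potential outcomes $(Y_t(1),Y_t(0))$, i.i.d. copies of a pair $(Y(1),Y(0))$ with arbitrary joint distribution; $\sigma(1),\sigma(0)>0$ are the standard deviations of $Y(1),Y(0)$. In stage $m$ a completely randomized experiment on fresh subjects is run with exactly $T_m(1)$ treated and $T_m(0)$ control; a subject assigned $w$ reveals $Y_t(w)$. Integrality of sizes is ignored. $T(w)=\sum_mT_m(w)$, $T(1)+T(0)=T$. Proxy mean squared error $V(T(1),T(0))=\sigma^2(1)/T(1)+\sigma^2(0)/T(0)$; $V(T^*(1),T^*(0))=(\sigma(1)+\sigma(0))^2/T$ is its value at the Neyman allocation $T^*(w)=\frac{\sigma(w)}{\sigma(1)+\sigma(0)}T$. $\widehat\sigma_1^2(w)$ is the unbiased sample variance (denominator $n-1$) of the observed outcomes of the stage-1 subjects assigned $w$, $\widehat\sigma_1(w)$ its nonnegative root; convention $\frac0{0+0}=\frac12$. $\log$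 is the natural logarithm. Two-stage adaptive Neyman allocation with parameter $\beta$: Stage 1 uses $(\frac\beta2\sqrt T,\frac\beta2\sqrt T)$. Compute $a=\frac{\widehat\sigma_1(1)}{\widehat\sigma_1(1)+\widehat\sigma_1(0)}T$, $b=\frac{\widehat\sigma_1(0)}{\widehat\sigma_1(1)+\widehat\sigma_1(0)}T$. If $a>\frac\beta2\sqrt T$ and $b>\frac\beta2\sqrt T$, stage 2 uses $(a-\frac\beta2\sqrt T,\ b-\frac\beta2\sqrt T)$. Otherwise, if $a\le\frac\beta2\sqrt T$, stage 2 uses $(0,T-\beta\sqrt T)$; if $b\le\frac\beta2\sqrt T$, stage 2 uses $(T-\beta\sqrt T,0)$. Assumption 2: there is a constant $C<\infty$, not depending on $T$, such that $|Y(1)|\le C\sigma(1)$ and $|Y(0)|\le C\sigma(0)$ almost surely. *)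

theory Defs
  imports "HOL-Probability.Probability"
begin

definition sd :: "'a measure \<Rightarrow> ('a \<Rightarrow> real) \<Rightarrow> real" where
  "sd Q f = sqrt (\<integral>x. (f x - (\<integral>y. f y \<partial>Q))\<^sup>2 \<partial>Q)"

definition sample_var :: "'a set \<Rightarrow> ('a \<Rightarrow> real) \<Rightarrow> real" where
  "sample_var I f =
     (\<Sum>i\<in>I. (f i - (\<Sum>j\<in>I. f j) / real (card I))\<^sup>2) / (real (card I) - 1)"

definition share :: "real \<Rightarrow> real \<Rightarrow> real" where
  "share x y = (if x + y = 0 then 1/2 else x / (x + y))"

definition proxy_mse :: "real \<Rightarrow> real \<Rightarrow> real \<Rightarrow> real \<Rightarrow> real" where
  "proxy_mse s1 s0 t1 t0 = s1\<^sup>2 / t1 + s0\<^sup>2 / t0"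

text \<open>Total allocation (T(1),T(0)) = stage-1 sizes + stage-2 sizes of the two-stage
  algorithm with parameter beta, given the stage-1 estimates s1, s0.\<close>
definition two_stage_alloc :: "real \<Rightarrow> real \<Rightarrow> real \<Rightarrow> real \<Rightarrow> real \<times> real" where
  "two_stage_alloc T \<beta> s1 s0 =
    (let h = \<beta> / 2 * sqrt T; a = share s1 s0 * T; b = share s0 s1 * T in
     if a > h \<and> b > h then (h + (a - h), h + (b - h))
     else if a \<le> h then (h + 0, h + (T - \<beta> * sqrt T))
     else (h + (T - \<beta> * sqrt T), h + 0))"

text \<open>Stage-1 experiment: 2n fresh subjects with i.i.d. potential outcomes drawn from the joint
  law Q of (Y(1),Y(0)), and an independent uniformly random treated set S of exactly n
  subjects (completely randomized design).\<close>
definition stage1_space :: "nat \<Rightarrow> (real \<times> real) measure \<Rightarrow> (nat set \<times> (nat \<Rightarrow> real \<times> real)) measure" where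
  "stage1_space n Q =
     measure_pmf (pmf_of_set {S. S \<subseteq> {..<2*n} \<and> card S = n})
       \<Otimes>\<^sub>M PiM {..<2*n} (\<lambda>_. Q)"

definition hat_sd1 :: "nat set \<times> (nat \<Rightarrow> real \<times> real) \<Rightarrow> real" where
  "hat_sd1 \<omega> = sqrt (sample_var (fst \<omega>) (\<lambda>t. fst (snd \<omega> t)))"

definition hat_sd0 :: "nat \<Rightarrow> nat set \<times> (nat \<Rightarrow> real \<times> real) \<Rightarrow> real" where
  "hat_sd0 n \<omega> = sqrt (sample_var ({..<2*n} - fst \<omega>) (\<lambda>t. snd (snd \<omega> t)))"

definition expected_V :: "real \<Rightarrow> real \<Rightarrow> nat \<Rightarrow> (real \<times> real) measure \<Rightarrow> real" where
  "expected_V T \<beta> n Q =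
     (\<integral>\<omega>. (case two_stage_alloc T \<beta> (hat_sd1 \<omega>) (hat_sd0 n \<omega>) of
              (t1, t0) \<Rightarrow> proxy_mse (sd Q fst) (sd Q snd) t1 t0) \<partial>stage1_space n Q)"

definition admissible :: "real \<Rightarrow> (real \<times> real) measure \<Rightarrow> bool" where
  "admissible C Q \<longleftrightarrow> prob_space Q \<and> sets Q = sets borel \<and>
     sd Q fst > 0 \<and> sd Q snd > 0 \<and>
     (AE x in Q. \<bar>fst x\<bar> \<le> C * sd Q fst \<and> \<bar>snd x\<bar> \<le> C * sd Q snd)"

end

(* With r = sigma(1) / (sigma(1) + sigma(0)) the Neyman share and q the share of treated subjects,
   V(qT, (1-q)T) = V(T*(1), T*(0)) (1 + (r - q)^2 / (q (1 - q))), so only this relative excess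
   has to be controlled.  Stage 1 gives each arm n = rho T subjects, rho = beta / (2 sqrt T).
   Hoeffding's inequality for the centred outcomes and for their squares shows that, outside an
   event of probability at most 8/T, both sample variances lie within a factor 1 +- d of
   n/(n-1) sigma(w)^2, where d = 2 theta + theta^2 and theta^2 = kappa = C^2 (log T / T)^(1/2).
   There the estimated share has excess at most d^2/2, and clipping it to [rho, 1 - rho] costs at
   most rho/(1 - rho); on the exceptional event the clipped allocation still satisfies
   V <= V(T*(1), T*(0)) / rho.  Since rho = 2 kappa and the lower bound on T forces kappa <= 9/100, the three
   contributions add up to less than 5 kappa. *)

theory Submission
  imports Defs
begin

section \<open>The excess of an allocation over the Neyman allocation\<close>

definition allocation_excess :: "real \<Rightarrow> real \<Rightarrow> real" where
  "allocation_excess r q = (r - q)\<^sup>2 / (q * (1 - q))"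

lemma allocation_excess_swap: "allocation_excess (1 - r) (1 - q) = allocation_excess r q"
  unfolding allocation_excess_def by (simp add: power2_commute mult.commute)

lemma one_plus_allocation_excess_eq:
  assumes "0 < q" "q < 1"
  shows "1 + allocation_excess r q = r\<^sup>2 / q + (1 - r)\<^sup>2 / (1 - q)"
proof -
  have "q * (1 - q) + (r - q)\<^sup>2 = r\<^sup>2 * (1 - q) + (1 - r)\<^sup>2 * q"
    by (simp add: power2_eq_square algebra_simps)
  then show ?thesis
    using assms unfolding allocation_excess_def by (simp add: field_simps)
qed

lemma proxy_mse_share_eq:
  assumes "s1 + s0 > 0" "T > 0" "0 < q" "q < 1"
  shows "proxy_mse s1 s0 (q * T) ((1 - q) * T) =
    (s1 + s0)\<^sup>2 / T * (1 + allocation_excess (s1 / (s1 + s0)) q)"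
proof -
  have "1 - s1 / (s1 + s0) = s0 / (s1 + s0)"
    using assms by (simp add: field_simps)
  then show ?thesis
    using assms unfolding one_plus_allocation_excess_eq[OF assms(3,4)] proxy_mse_def
    by (simp add: power_divide field_simps)
qed

lemma one_plus_allocation_excess_le:
  assumes "0 < \<rho>" "\<rho> \<le> q" "q \<le> 1 - \<rho>" "0 \<le> r" "r \<le> 1"
  shows "1 + allocation_excess r q \<le> 1 / \<rho>"
proof -
  have "r\<^sup>2 / q + (1 - r)\<^sup>2 / (1 - q) \<le> r\<^sup>2 / \<rho> + (1 - r)\<^sup>2 / \<rho>"
    using assms by (intro add_mono divide_left_mono) auto
  also have "\<dots> = (1 - 2 * (r * (1 - r))) / \<rho>"
    by (simp add: power2_eq_square algebra_simps add_divide_distrib[symmetric])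
  also have "\<dots> \<le> 1 / \<rho>"
    using assms by (intro divide_right_mono) auto
  finally show ?thesis
    using assms by (simp add: one_plus_allocation_excess_eq)
qed

lemma allocation_excess_shares:
  assumes "s1 > 0" "s0 > 0" "u1 > 0" "u0 > 0"
  shows "allocation_excess (s1 / (s1 + s0)) (u1 / (u1 + u0)) =
    s1 * s0 / (s1 + s0)\<^sup>2 * ((u1/s1 - u0/s0)\<^sup>2 / ((u1/s1) * (u0/s0)))"
proof -
  have sums: "s1 + s0 > 0" "u1 + u0 > 0"
    using assms by auto
  have "1 - u1 / (u1 + u0) = u0 / (u1 + u0)"
    "s1 / (s1 + s0) - u1 / (u1 + u0) = (s1 * u0 - s0 * u1) / ((s1 + s0) * (u1 + u0))"
    using sums by (simp_all add: field_simps)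
  then have "allocation_excess (s1 / (s1 + s0)) (u1 / (u1 + u0)) =
      ((s1 * u0 - s0 * u1)\<^sup>2 / ((s1 + s0)\<^sup>2 * (u1 + u0)\<^sup>2)) / ((u1 * u0) / (u1 + u0)\<^sup>2)"
    unfolding allocation_excess_def by (simp add: power_divide power_mult_distrib power2_eq_square)
  also have "\<dots> = (s1 * u0 - s0 * u1)\<^sup>2 / ((s1 + s0)\<^sup>2 * (u1 * u0))"
    using sums assms by (simp add: field_simps)
  also have "\<dots> = s1 * s0 / (s1 + s0)\<^sup>2 * ((u1/s1 - u0/s0)\<^sup>2 / ((u1/s1) * (u0/s0)))"
  proof -
    have "u1/s1 - u0/s0 = (s0 * u1 - s1 * u0) / (s1 * s0)"
      using assms by (simp add: field_simps)
    then have "(u1/s1 - u0/s0)\<^sup>2 / ((u1/s1) * (u0/s0)) = (s1 * u0 - s0 * u1)\<^sup>2 / (s1 * s0 * (u1 * u0))"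
      using assms by (simp add: power_divide power2_commute[of "s0 * u1"] power2_eq_square[of "s1 * s0"])
    then show ?thesis
      using assms by simp
  qed
  finally show ?thesis .
qed

lemma mult_div_square_sum_le_quarter: "s1 * s0 / (s1 + s0)\<^sup>2 \<le> (1/4 :: real)"
proof -
  have "4 * (s1 * s0) \<le> (s1 + s0)\<^sup>2"
    using sum_squares_ge_zero[of "s1 - s0" 0] by (simp add: power2_eq_square algebra_simps)
  then show ?thesis
    by (cases "s1 + s0 = 0") (simp_all add: field_simps)
qed

(* Squaring gives (x^2 + y^2)^2 (1 - d^2) <= 4 x^2 y^2, and 1 <= (1 - d^2) (1 + d^2)^2 holds as
   long as d^2 + d^4 <= 1. *)
lemma square_sum_div_mult_le:
  fixes x y d :: real
  assumes "x > 0" "y > 0" "d\<^sup>2 \<le> 3/5" and close: "\<bar>x\<^sup>2 - y\<^sup>2\<bar> \<le> d * (x\<^sup>2 + y\<^sup>2)"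
  shows "(x\<^sup>2 + y\<^sup>2) / (x * y) \<le> 2 * (1 + d\<^sup>2)"
proof -
  define z where "z = (x\<^sup>2 + y\<^sup>2) / (x * y)"
  have "(x\<^sup>2 - y\<^sup>2)\<^sup>2 \<le> (d * (x\<^sup>2 + y\<^sup>2))\<^sup>2"
    using close by (subst power2_le_iff_abs_le) (auto intro: order_trans[OF abs_ge_zero])
  then have "(x\<^sup>2 + y\<^sup>2)\<^sup>2 * (1 - d\<^sup>2) \<le> 4 * (x * y)\<^sup>2"
    by (simp add: power2_eq_square algebra_simps)
  then have "z\<^sup>2 * (1 - d\<^sup>2) \<le> 4"
    using assms(1,2) by (simp add: z_def power_divide pos_divide_le_eq)
  moreover have "4 \<le> (2 * (1 + d\<^sup>2))\<^sup>2 * (1 - d\<^sup>2)"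
  proof -
    have "d\<^sup>2 * d\<^sup>2 \<le> 3/5 * (3/5)"
      using assms(3) by (intro mult_mono) auto
    then have "0 \<le> d\<^sup>2 * (1 - d\<^sup>2 - d\<^sup>2 * d\<^sup>2)"
      using assms(3) by simp
    then show ?thesis
      by (simp add: power2_eq_square algebra_simps)
  qed
  ultimately have "z\<^sup>2 * (1 - d\<^sup>2) \<le> (2 * (1 + d\<^sup>2))\<^sup>2 * (1 - d\<^sup>2)"
    by linarith
  then have "z\<^sup>2 \<le> (2 * (1 + d\<^sup>2))\<^sup>2"
    by (rule mult_right_le_imp_le) (use assms(3) in linarith)
  then show ?thesis
    unfolding z_def[symmetric] by (rule power2_le_imp_le) simp
qed

lemma square_diff_div_mult_le:
  fixes x y k d :: real
  assumes "x > 0" "y > 0" "0 \<le> d" "d\<^sup>2 \<le> 3/5"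
    and "k * (1 - d) \<le> x\<^sup>2" "x\<^sup>2 \<le> k * (1 + d)"
    and "k * (1 - d) \<le> y\<^sup>2" "y\<^sup>2 \<le> k * (1 + d)"
  shows "(x - y)\<^sup>2 / (x * y) \<le> 2 * d\<^sup>2"
proof -
  have d1: "d < 1"
    using assms(4) abs_square_less_1[of d] by auto
  have cross: "u * (1 - d) \<le> v * (1 + d)"
    if "u \<le> k * (1 + d)" "k * (1 - d) \<le> v" for u v
  proof -
    have "u * (1 - d) \<le> k * (1 + d) * (1 - d)"
      using that d1 by (intro mult_right_mono) auto
    also have "\<dots> = k * (1 - d) * (1 + d)"
      by simp
    also have "\<dots> \<le> v * (1 + d)"
      using that assms(3) by (intro mult_right_mono) auto
    finally show ?thesis .
  qed
  have "x\<^sup>2 * (1 - d) \<le> y\<^sup>2 * (1 + d)" "y\<^sup>2 * (1 - d) \<le> x\<^sup>2 * (1 + d)"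
    using assms(5-8) by (auto intro: cross)
  then have "\<bar>x\<^sup>2 - y\<^sup>2\<bar> \<le> d * (x\<^sup>2 + y\<^sup>2)"
    by (simp add: abs_le_iff algebra_simps)
  moreover have "(x - y)\<^sup>2 / (x * y) = (x\<^sup>2 + y\<^sup>2) / (x * y) - 2"
    using assms(1,2) by (simp add: field_simps power2_eq_square)
  ultimately show ?thesis
    using square_sum_div_mult_le[OF assms(1,2,4)] by simp
qed

lemma allocation_excess_estimated_le:
  fixes \<sigma>1 \<sigma>0 s1 s0 k d :: real
  assumes "\<sigma>1 > 0" "\<sigma>0 > 0" "s1 > 0" "s0 > 0" "0 \<le> d" "d\<^sup>2 \<le> 3/5"
    and "k * (1 - d) * \<sigma>1\<^sup>2 \<le> s1\<^sup>2" "s1\<^sup>2 \<le> k * (1 + d) * \<sigma>1\<^sup>2"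
    and "k * (1 - d) * \<sigma>0\<^sup>2 \<le> s0\<^sup>2" "s0\<^sup>2 \<le> k * (1 + d) * \<sigma>0\<^sup>2"
  shows "allocation_excess (\<sigma>1 / (\<sigma>1 + \<sigma>0)) (s1 / (s1 + s0)) \<le> d\<^sup>2 / 2"
proof -
  have ratio: "k * (1 - d) \<le> (s / \<sigma>)\<^sup>2" "(s / \<sigma>)\<^sup>2 \<le> k * (1 + d)"
    if "k * (1 - d) * \<sigma>\<^sup>2 \<le> s\<^sup>2" "s\<^sup>2 \<le> k * (1 + d) * \<sigma>\<^sup>2" "\<sigma> > 0" for s \<sigma> :: real
    using that by (simp_all add: power_divide pos_le_divide_eq pos_divide_le_eq)
  have "allocation_excess (\<sigma>1 / (\<sigma>1 + \<sigma>0)) (s1 / (s1 + s0)) =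
      \<sigma>1 * \<sigma>0 / (\<sigma>1 + \<sigma>0)\<^sup>2 * ((s1/\<sigma>1 - s0/\<sigma>0)\<^sup>2 / ((s1/\<sigma>1) * (s0/\<sigma>0)))"
    using assms(1-4) by (rule allocation_excess_shares)
  also have "\<dots> \<le> 1/4 * (2 * d\<^sup>2)"
  proof (rule mult_mono)
    show "(s1/\<sigma>1 - s0/\<sigma>0)\<^sup>2 / ((s1/\<sigma>1) * (s0/\<sigma>0)) \<le> 2 * d\<^sup>2"
      using assms(1-6) ratio[OF assms(7,8,1)] ratio[OF assms(9,10,2)]
      by (intro square_diff_div_mult_le[where k = k]) simp_all
    show "0 \<le> (s1/\<sigma>1 - s0/\<sigma>0)\<^sup>2 / ((s1/\<sigma>1) * (s0/\<sigma>0))"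
      using assms(1-4) by (intro divide_nonneg_pos) simp_all
    show "\<sigma>1 * \<sigma>0 / (\<sigma>1 + \<sigma>0)\<^sup>2 \<le> 1/4"
      by (rule mult_div_square_sum_le_quarter)
  qed simp
  finally show ?thesis
    by simp
qed

lemma allocation_excess_raise_le:
  assumes "0 < p" "p \<le> \<rho>" "\<rho> \<le> 1/2" "0 \<le> r"
  shows "allocation_excess r \<rho> \<le> max (allocation_excess r p) (\<rho> / (1 - \<rho>))"
proof (cases "r \<le> \<rho>")
  case True
  then have "(r - \<rho>)\<^sup>2 \<le> \<rho>\<^sup>2"
    using assms by (subst power2_le_iff_abs_le) auto
  then have "allocation_excess r \<rho> \<le> \<rho>\<^sup>2 / (\<rho> * (1 - \<rho>))"
    using assms unfolding allocation_excess_def by (intro divide_right_mono) auto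
  also have "\<dots> = \<rho> / (1 - \<rho>)"
    using assms by (simp add: power2_eq_square)
  finally show ?thesis
    by simp
next
  case False
  have "(r - \<rho>)\<^sup>2 \<le> (r - p)\<^sup>2"
    using False assms by (intro power_mono) auto
  moreover have "p * (1 - p) \<le> \<rho> * (1 - \<rho>)"
  proof -
    have "0 \<le> (\<rho> - p) * (1 - \<rho> - p)"
      using assms by (intro mult_nonneg_nonneg) auto
    then show ?thesis
      by (simp add: algebra_simps)
  qed
  ultimately have "allocation_excess r \<rho> \<le> allocation_excess r p"
    using assms unfolding allocation_excess_def by (intro frac_le) auto
  then show ?thesis
    by simp
qed

lemma allocation_excess_clamp_le:
  assumes "0 < \<rho>" "\<rho> \<le> 1/2" "0 \<le> r" "r \<le> 1" "0 < p" "p < 1"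
  shows "allocation_excess r (min (max p \<rho>) (1 - \<rho>)) \<le> max (allocation_excess r p) (\<rho> / (1 - \<rho>))"
proof -
  consider "p < \<rho>" | "\<rho> \<le> p" "p \<le> 1 - \<rho>" | "1 - \<rho> < p"
    by linarith
  then show ?thesis
  proof cases
    case 1
    then show ?thesis
      using assms allocation_excess_raise_le[of p \<rho> r] by simp
  next
    case 2
    then show ?thesis
      by simp
  next
    case 3
    then have "allocation_excess (1 - r) \<rho> \<le> max (allocation_excess (1 - r) (1 - p)) (\<rho> / (1 - \<rho>))"
      using assms by (intro allocation_excess_raise_le) auto
    then show ?thesis
      using 3 assms allocation_excess_swap[of r "1 - \<rho>"] allocation_excess_swap[of r p] by simp
  qed
qed

section \<open>The allocation of the two-stage algorithm\<close>

lemma share_swap: "share y x = 1 - share x y"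
  unfolding share_def by (cases "x + y = 0") (simp_all add: add.commute field_simps)

(* rho T = beta sqrt T / 2 is the stage-1 size of each arm; the algorithm clips the estimated
   Neyman share to [rho, 1 - rho]. *)
lemma two_stage_alloc_eq:
  fixes T \<beta> s1 s0 :: real
  defines "\<rho> \<equiv> \<beta> * sqrt T / (2 * T)"
  defines "q \<equiv> min (max (share s1 s0) \<rho>) (1 - \<rho>)"
  assumes T: "T > 0" and feasible: "\<beta> * sqrt T \<le> T"
  shows "two_stage_alloc T \<beta> s1 s0 = (q * T, (1 - q) * T)"
proof -
  define p where "p = share s1 s0"
  have "\<beta> / 2 * sqrt T = \<rho> * T" "\<beta> * sqrt T = 2 * (\<rho> * T)"
    using T by (simp_all add: \<rho>_def)
  then have alloc: "two_stage_alloc T \<beta> s1 s0 =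
      (if \<rho> < p \<and> \<rho> < 1 - p then (p * T, (1 - p) * T)
       else if p \<le> \<rho> then (\<rho> * T, T - \<rho> * T) else (T - \<rho> * T, \<rho> * T))"
    using T unfolding two_stage_alloc_def Let_def share_swap[of s0 s1] p_def
    by (simp add: mult_less_cancel_right_pos mult_le_cancel_right_pos)
  have "\<rho> \<le> 1/2"
    using T feasible by (simp add: \<rho>_def field_simps)
  then consider "\<rho> < p" "\<rho> < 1 - p" "q = p" | "p \<le> \<rho>" "q = \<rho>" | "\<rho> < p" "1 - p \<le> \<rho>" "q = 1 - \<rho>"
    unfolding q_def p_def[symmetric] by linarith
  then show ?thesis
    unfolding alloc by cases (simp_all add: left_diff_distrib)
qed

lemma two_stage_mse_eq:
  fixes T \<beta> \<sigma>1 \<sigma>0 s1 s0 :: real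
  defines "\<rho> \<equiv> \<beta> * sqrt T / (2 * T)"
  assumes "T > 0" "0 < \<beta> * sqrt T" "\<beta> * sqrt T \<le> T" "\<sigma>1 + \<sigma>0 > 0"
  shows "(case two_stage_alloc T \<beta> s1 s0 of (t1, t0) \<Rightarrow> proxy_mse \<sigma>1 \<sigma>0 t1 t0) =
    (\<sigma>1 + \<sigma>0)\<^sup>2 / T * (1 + allocation_excess (\<sigma>1 / (\<sigma>1 + \<sigma>0)) (min (max (share s1 s0) \<rho>) (1 - \<rho>)))"
proof -
  define q where "q = min (max (share s1 s0) \<rho>) (1 - \<rho>)"
  have "0 < \<rho>" "\<rho> \<le> 1/2"
    using assms(2-4) by (simp_all add: \<rho>_def field_simps)
  then have "0 < q" "q < 1"
    by (auto simp: q_def)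
  moreover have "two_stage_alloc T \<beta> s1 s0 = (q * T, (1 - q) * T)"
    unfolding q_def \<rho>_def using assms(2,4) by (rule two_stage_alloc_eq)
  ultimately show ?thesis
    using assms(2,5) by (simp add: proxy_mse_share_eq flip: q_def)
qed

lemma two_stage_mse_nonneg:
  fixes T \<beta> \<sigma>1 \<sigma>0 s1 s0 :: real
  assumes "T > 0" "0 < \<beta> * sqrt T" "\<beta> * sqrt T \<le> T"
  shows "0 \<le> (case two_stage_alloc T \<beta> s1 s0 of (t1, t0) \<Rightarrow> proxy_mse \<sigma>1 \<sigma>0 t1 t0)"
proof -
  define \<rho> where "\<rho> = \<beta> * sqrt T / (2 * T)"
  define q where "q = min (max (share s1 s0) \<rho>) (1 - \<rho>)"
  have "0 < \<rho>" "\<rho> \<le> 1/2"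
    using assms by (simp_all add: \<rho>_def field_simps)
  then have "0 < q" "q < 1"
    by (auto simp: q_def)
  moreover have "two_stage_alloc T \<beta> s1 s0 = (q * T, (1 - q) * T)"
    unfolding q_def \<rho>_def using assms(1,3) by (rule two_stage_alloc_eq)
  ultimately show ?thesis
    using assms(1) by (simp add: proxy_mse_def)
qed

lemma two_stage_mse_le:
  fixes T \<beta> \<sigma>1 \<sigma>0 s1 s0 :: real
  defines "\<rho> \<equiv> \<beta> * sqrt T / (2 * T)"
  assumes "T > 0" "0 < \<beta> * sqrt T" "\<beta> * sqrt T \<le> T" "\<sigma>1 > 0" "\<sigma>0 > 0"
  shows "(case two_stage_alloc T \<beta> s1 s0 of (t1, t0) \<Rightarrow> proxy_mse \<sigma>1 \<sigma>0 t1 t0)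
    \<le> (\<sigma>1 + \<sigma>0)\<^sup>2 / T / \<rho>"
proof -
  define r q where "r = \<sigma>1 / (\<sigma>1 + \<sigma>0)" and "q = min (max (share s1 s0) \<rho>) (1 - \<rho>)"
  have "0 < \<rho>" "\<rho> \<le> 1/2"
    using assms(2-4) by (simp_all add: \<rho>_def field_simps)
  then have "1 + allocation_excess r q \<le> 1 / \<rho>"
    using assms by (intro one_plus_allocation_excess_le) (auto simp: r_def q_def)
  then have "(\<sigma>1 + \<sigma>0)\<^sup>2 / T * (1 + allocation_excess r q) \<le> (\<sigma>1 + \<sigma>0)\<^sup>2 / T * (1 / \<rho>)"
    using assms(2) by (intro mult_left_mono) auto
  then show ?thesis
    using assms by (simp add: two_stage_mse_eq[OF assms(2-4), folded \<rho>_def] r_def q_def)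
qed

lemma two_stage_mse_le_of_estimates:
  fixes T \<beta> \<sigma>1 \<sigma>0 v1 v0 k d :: real
  defines "\<rho> \<equiv> \<beta> * sqrt T / (2 * T)"
  assumes T: "T > 0" "0 < \<beta> * sqrt T" "\<beta> * sqrt T \<le> T" and \<sigma>: "\<sigma>1 > 0" "\<sigma>0 > 0"
    and k: "k > 0" and d: "0 \<le> d" "d\<^sup>2 \<le> 3/5"
    and v1: "k * (1 - d) * \<sigma>1\<^sup>2 \<le> v1" "v1 \<le> k * (1 + d) * \<sigma>1\<^sup>2"
    and v0: "k * (1 - d) * \<sigma>0\<^sup>2 \<le> v0" "v0 \<le> k * (1 + d) * \<sigma>0\<^sup>2"
  shows "(case two_stage_alloc T \<beta> (sqrt v1) (sqrt v0) of (t1, t0) \<Rightarrow> proxy_mse \<sigma>1 \<sigma>0 t1 t0)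
    \<le> (\<sigma>1 + \<sigma>0)\<^sup>2 / T * (1 + max (d\<^sup>2 / 2) (\<rho> / (1 - \<rho>)))"
proof -
  have "d < 1"
    using d abs_square_less_1[of d] by auto
  then have "0 < k * (1 - d) * \<sigma>1\<^sup>2" "0 < k * (1 - d) * \<sigma>0\<^sup>2"
    using k \<sigma> by simp_all
  then have v: "v1 > 0" "v0 > 0"
    using v1 v0 by linarith+
  define s1 s0 where "s1 = sqrt v1" and "s0 = sqrt v0"
  have s: "s1 > 0" "s0 > 0" "s1\<^sup>2 = v1" "s0\<^sup>2 = v0"
    using v by (simp_all add: s1_def s0_def)
  define r p where "r = \<sigma>1 / (\<sigma>1 + \<sigma>0)" and "p = s1 / (s1 + s0)"
  have "0 < \<rho>" "\<rho> \<le> 1/2"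
    using T by (simp_all add: \<rho>_def field_simps)
  moreover have "0 < r" "r < 1" "0 < p" "p < 1"
    using \<sigma> s by (simp_all add: r_def p_def field_simps)
  ultimately have "allocation_excess r (min (max p \<rho>) (1 - \<rho>)) \<le> max (allocation_excess r p) (\<rho> / (1 - \<rho>))"
    by (intro allocation_excess_clamp_le) auto
  also have "allocation_excess r p \<le> d\<^sup>2 / 2"
    unfolding r_def p_def using \<sigma> s k d v1 v0
    by (intro allocation_excess_estimated_le[where k = k]) simp_all
  finally have "(\<sigma>1 + \<sigma>0)\<^sup>2 / T * (1 + allocation_excess r (min (max p \<rho>) (1 - \<rho>)))
      \<le> (\<sigma>1 + \<sigma>0)\<^sup>2 / T * (1 + max (d\<^sup>2 / 2) (\<rho> / (1 - \<rho>)))"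
    using T(1) by (intro mult_left_mono) auto
  moreover have "share s1 s0 = p"
    using s by (simp add: share_def p_def)
  ultimately show ?thesis
    using T \<sigma> by (simp add: two_stage_mse_eq[OF T, folded \<rho>_def] r_def flip: s1_def s0_def)
qed

section \<open>Concentration of the stage-one sample variances\<close>

lemma sd_squared: "(sd M f)\<^sup>2 = (\<integral>x. (f x - (\<integral>y. f y \<partial>M))\<^sup>2 \<partial>M)"
  unfolding sd_def by (simp add: integral_nonneg_AE)

lemma (in prob_space) sd_le_of_AE_abs_le:
  fixes f :: "'a \<Rightarrow> real"
  assumes f: "f \<in> borel_measurable M" and bound: "AE x in M. \<bar>f x\<bar> \<le> B"
  shows "sd M f \<le> B"
proof -
  have bound2: "AE x in M. (f x)\<^sup>2 \<le> B\<^sup>2"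
    using bound by eventually_elim (auto simp: abs_le_square_iff[symmetric] intro: power_mono)
  have "integrable M f"
    using bound f by (intro integrable_const_bound[of _ B]) auto
  moreover have integrable2: "integrable M (\<lambda>x. (f x)\<^sup>2)"
    using bound2 f by (intro integrable_const_bound[of _ "B\<^sup>2"]) auto
  ultimately have "(sd M f)\<^sup>2 = expectation (\<lambda>x. (f x)\<^sup>2) - (expectation f)\<^sup>2"
    unfolding sd_squared by (rule variance_eq)
  also have "\<dots> \<le> expectation (\<lambda>x. (f x)\<^sup>2)"
    by simp
  also have "\<dots> \<le> B\<^sup>2"
    using integral_mono_AE[OF integrable2 _ bound2] by (simp add: prob_space)
  finally have "(sd M f)\<^sup>2 \<le> B\<^sup>2" .
  moreover have "AE x in M. 0 \<le> B"
    using bound by eventually_elim (rule order_trans[OF abs_ge_zero])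
  then have "0 \<le> B"
    by simp
  ultimately show ?thesis
    using power2_le_imp_le by blast
qed

lemma (in prob_space) one_le_of_AE_abs_le_sd:
  fixes f :: "'a \<Rightarrow> real"
  assumes "f \<in> borel_measurable M" "sd M f > 0" "AE x in M. \<bar>f x\<bar> \<le> C * sd M f"
  shows "1 \<le> C"
  using sd_le_of_AE_abs_le[OF assms(1,3)] assms(2) by simp

lemma (in prob_space) centered_moments:
  fixes f :: "'a \<Rightarrow> real"
  assumes f: "f \<in> borel_measurable M" and bound: "AE x in M. \<bar>f x\<bar> \<le> B"
  shows "expectation (\<lambda>x. f x - expectation f) = 0"
    and "expectation (\<lambda>x. (f x - expectation f)\<^sup>2) = (sd M f)\<^sup>2"
    and "AE x in M. f x - expectation f \<in> {- B - expectation f .. B - expectation f}"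
    and "AE x in M. (f x - expectation f)\<^sup>2 \<in> {0 .. (2 * B)\<^sup>2}"
proof -
  have integrable: "integrable M f"
    using bound f by (intro integrable_const_bound[of _ B]) auto
  then show "expectation (\<lambda>x. f x - expectation f) = 0"
    by (simp add: prob_space)
  show "expectation (\<lambda>x. (f x - expectation f)\<^sup>2) = (sd M f)\<^sup>2"
    by (simp add: sd_squared)
  show "AE x in M. f x - expectation f \<in> {- B - expectation f .. B - expectation f}"
    using bound by eventually_elim auto
  have "\<bar>expectation f\<bar> \<le> expectation (\<lambda>x. \<bar>f x\<bar>)"
    by (rule integral_abs_bound)
  also have "\<dots> \<le> B"
    using integral_mono_AE[of M "\<lambda>x. \<bar>f x\<bar>" "\<lambda>_. B"] integrable bound by (simp add: prob_space)
  finally have mean_bound: "\<bar>expectation f\<bar> \<le> B" .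
  show "AE x in M. (f x - expectation f)\<^sup>2 \<in> {0 .. (2 * B)\<^sup>2}"
    using bound
  proof eventually_elim
    case (elim x)
    then have "\<bar>f x - expectation f\<bar> \<le> 2 * B"
      using mean_bound by linarith
    then have "(f x - expectation f)\<^sup>2 \<le> (2 * B)\<^sup>2"
      by (subst power2_le_iff_abs_le) (use elim in auto)
    then show ?case
      by simp
  qed
qed

lemma integral_PiM_component:
  fixes g :: "'a \<Rightarrow> real"
  assumes "prob_space Q" "i \<in> I" "g \<in> borel_measurable Q"
  shows "(\<integral>y. g (y i) \<partial>PiM I (\<lambda>_. Q)) = (\<integral>x. g x \<partial>Q)"
proof -
  have "(\<integral>y. g (y i) \<partial>PiM I (\<lambda>_. Q)) = (\<integral>x. g x \<partial>distr (PiM I (\<lambda>_. Q)) Q (\<lambda>y. y i))"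
    using assms by (intro integral_distr[symmetric]) auto
  then show ?thesis
    using assms distr_PiM_component[of I "\<lambda>_. Q" i] by simp
qed

lemma indep_vars_PiM_components:
  fixes g :: "'a \<Rightarrow> real"
  assumes Q: "prob_space Q" and "J \<subseteq> I" "J \<noteq> {}" and g: "g \<in> borel_measurable Q"
  shows "prob_space.indep_vars (PiM I (\<lambda>_. Q)) (\<lambda>_. borel) (\<lambda>t y. g (y t)) J"
proof -
  let ?M = "PiM I (\<lambda>_. Q)"
  interpret P: prob_space ?M
    using Q by (intro prob_space_PiM)
  have I: "I \<noteq> {}"
    using assms(2,3) by auto
  have "distr ?M ?M (\<lambda>x. \<lambda>i\<in>I. x i) = distr ?M ?M (\<lambda>x. x)"
    by (rule distr_cong) (auto simp: space_PiM PiE_def extensional_def fun_eq_iff)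
  also have "\<dots> = PiM I (\<lambda>i. distr ?M Q (\<lambda>y. y i))"
    by (auto intro!: PiM_cong simp: distr_PiM_component[OF Q])
  finally have "P.indep_vars (\<lambda>_. Q) (\<lambda>i y. y i) I"
    by (subst P.indep_vars_iff_distr_eq_PiM'[OF I]) auto
  then have "P.indep_vars (\<lambda>_. borel) (\<lambda>i y. g (y i)) I"
    by (rule P.indep_vars_compose2) (use g in auto)
  then show ?thesis
    using assms(2) by (rule P.indep_vars_subset)
qed

lemma Hoeffding_PiM_components:
  fixes g :: "'a \<Rightarrow> real" and a b \<epsilon> :: real
  assumes Q: "prob_space Q" and g: "g \<in> borel_measurable Q"
    and range: "AE x in Q. g x \<in> {a..b}" "a < b"
    and J: "finite J" "J \<subseteq> I" "J \<noteq> {}" and "0 \<le> \<epsilon>"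
  shows "measure (PiM I (\<lambda>_. Q))
      {y \<in> space (PiM I (\<lambda>_. Q)). \<epsilon> \<le> \<bar>(\<Sum>t\<in>J. g (y t)) - card J * (\<integral>x. g x \<partial>Q)\<bar>}
    \<le> 2 * exp (-2 * \<epsilon>\<^sup>2 / (card J * (b - a)\<^sup>2))"
proof -
  interpret P: prob_space "PiM I (\<lambda>_. Q)"
    using Q by (intro prob_space_PiM)
  interpret H: Hoeffding_ineq "PiM I (\<lambda>_. Q)" J "\<lambda>t y. g (y t)" "\<lambda>_. a" "\<lambda>_. b"
      "card J * (\<integral>x. g x \<partial>Q)"
  proof unfold_locales
    show "P.indep_vars (\<lambda>_. borel) (\<lambda>t y. g (y t)) J"
      using Q J(2,3) g by (rule indep_vars_PiM_components)
    show "AE y in PiM I (\<lambda>_. Q). g (y i) \<in> {a..b}" if "i \<in> J" for i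
      using Q that J range by (intro AE_PiM_component) auto
    have "(\<Sum>t\<in>J. P.expectation (\<lambda>y. g (y t))) = card J * (\<integral>x. g x \<partial>Q)"
      using Q J g by (simp add: integral_PiM_component subsetD)
    then show "card J * (\<integral>x. g x \<partial>Q) \<equiv> (\<Sum>t\<in>J. P.expectation (\<lambda>y. g (y t)))"
      by simp
  qed (use J in auto)
  show ?thesis
    using H.Hoeffding_ineq_abs_ge[of \<epsilon>] J range \<open>0 \<le> \<epsilon>\<close> by (simp add: card_gt_0_iff)
qed

lemma sample_var_shift:
  assumes "finite J"
  shows "sample_var J a =
    ((\<Sum>t\<in>J. (a t - c)\<^sup>2) - (\<Sum>t\<in>J. a t - c)\<^sup>2 / card J) / (real (card J) - 1)"
proof (cases "J = {}")
  case False
  define b where "b t = a t - c" for t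
  define m where "m = (\<Sum>t\<in>J. b t) / card J"
  have n: "card J > 0"
    using assms False by (simp add: card_gt_0_iff)
  have "(\<Sum>j\<in>J. a j) / card J = m + c"
    using n by (simp add: m_def b_def sum_subtractf field_simps)
  then have "(\<Sum>t\<in>J. (a t - (\<Sum>j\<in>J. a j) / card J)\<^sup>2) = (\<Sum>t\<in>J. (b t - m)\<^sup>2)"
    by (simp add: b_def algebra_simps)
  also have "\<dots> = (\<Sum>t\<in>J. (b t)\<^sup>2 - 2 * m * b t + m\<^sup>2)"
    by (rule sum.cong) (simp_all add: power2_diff)
  also have "\<dots> = (\<Sum>t\<in>J. (b t)\<^sup>2) - 2 * m * (\<Sum>t\<in>J. b t) + card J * m\<^sup>2"
    by (simp add: sum.distrib sum_subtractf sum_distrib_left)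
  also have "\<dots> = (\<Sum>t\<in>J. (b t)\<^sup>2) - (\<Sum>t\<in>J. b t)\<^sup>2 / card J"
    using n by (simp add: m_def power2_eq_square field_simps)
  finally show ?thesis
    unfolding sample_var_def b_def by simp
qed (simp add: sample_var_def)

lemma centered_sums_bounds:
  fixes n S1 S2 \<sigma> \<theta> :: real
  assumes "n > 0" "\<bar>S2 - n * \<sigma>\<^sup>2\<bar> \<le> n * (2 * \<theta>) * \<sigma>\<^sup>2" "\<bar>S1\<bar> \<le> n * \<theta> * \<sigma>"
  shows "n * (1 - (2 * \<theta> + \<theta>\<^sup>2)) * \<sigma>\<^sup>2 \<le> S2 - S1\<^sup>2 / n"
    and "S2 - S1\<^sup>2 / n \<le> n * (1 + (2 * \<theta> + \<theta>\<^sup>2)) * \<sigma>\<^sup>2"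
proof -
  have "S1\<^sup>2 \<le> (n * \<theta> * \<sigma>)\<^sup>2"
    using assms(3) by (subst power2_le_iff_abs_le) (auto intro: order_trans[OF abs_ge_zero])
  then have "S1\<^sup>2 / n \<le> n * \<theta>\<^sup>2 * \<sigma>\<^sup>2"
    using assms(1) by (simp add: field_simps power2_eq_square)
  moreover have "0 \<le> S1\<^sup>2 / n" "0 \<le> n * \<theta>\<^sup>2 * \<sigma>\<^sup>2"
    using assms(1) by simp_all
  ultimately show "n * (1 - (2 * \<theta> + \<theta>\<^sup>2)) * \<sigma>\<^sup>2 \<le> S2 - S1\<^sup>2 / n"
    and "S2 - S1\<^sup>2 / n \<le> n * (1 + (2 * \<theta> + \<theta>\<^sup>2)) * \<sigma>\<^sup>2"
    using assms(2) by (auto simp: algebra_simps abs_le_iff)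
qed

lemma centered_sums_deviation:
  fixes Q :: "'a measure" and \<phi> :: "'a \<Rightarrow> real" and I J :: "'b set" and n :: nat and C \<theta> :: real
  defines "\<sigma> \<equiv> sd Q \<phi>" and "\<mu> \<equiv> \<integral>x. \<phi> x \<partial>Q" and "M \<equiv> PiM I (\<lambda>_. Q)"
  assumes Q: "prob_space Q" and \<phi>: "\<phi> \<in> borel_measurable Q" and \<sigma>: "\<sigma> > 0"
    and bound: "AE x in Q. \<bar>\<phi> x\<bar> \<le> C * \<sigma>"
    and J: "finite J" "J \<subseteq> I" "card J = n" "n > 0" and \<theta>: "\<theta> \<ge> 0"
  shows "measure M {y \<in> space M.
      real n * (2 * \<theta> * \<sigma>\<^sup>2) \<le> \<bar>(\<Sum>t\<in>J. (\<phi> (y t) - \<mu>)\<^sup>2) - real n * \<sigma>\<^sup>2\<bar>}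
      \<le> 2 * exp (- (n * \<theta>\<^sup>2 / (2 * C^4)))" (is "?P2 \<le> _")
    and "measure M {y \<in> space M. real n * (\<theta> * \<sigma>) \<le> \<bar>\<Sum>t\<in>J. \<phi> (y t) - \<mu>\<bar>}
      \<le> 2 * exp (- (n * \<theta>\<^sup>2 / (2 * C\<^sup>2)))" (is "?P1 \<le> _")
proof -
  interpret Q: prob_space Q
    by (rule Q)
  note moments = Q.centered_moments[OF \<phi> bound, folded \<mu>_def \<sigma>_def]
  have C: "C \<ge> 1"
    using Q.one_le_of_AE_abs_le_sd[OF \<phi>] \<sigma> bound by (simp add: \<sigma>_def)
  have J0: "J \<noteq> {}"
    using J by auto
  have measurable: "(\<lambda>x. \<phi> x - \<mu>) \<in> borel_measurable Q" "(\<lambda>x. (\<phi> x - \<mu>)\<^sup>2) \<in> borel_measurable Q"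
    using \<phi> by measurable
  have "?P2 \<le> 2 * exp (-2 * (real n * (2 * \<theta> * \<sigma>\<^sup>2))\<^sup>2 / (n * ((2 * (C * \<sigma>))\<^sup>2 - 0)\<^sup>2))"
    unfolding M_def
    using Hoeffding_PiM_components[OF Q _ moments(4) _ J(1,2) J0, where \<epsilon> = "real n * (2 * \<theta> * \<sigma>\<^sup>2)"]
      measurable moments(2) J C \<sigma> \<theta>
    by simp
  also have "\<dots> = 2 * exp (- (n * \<theta>\<^sup>2 / (2 * C^4)))"
    using J(4) \<sigma> C by (simp add: power2_eq_square power4_eq_xxxx field_simps)
  finally show "?P2 \<le> 2 * exp (- (n * \<theta>\<^sup>2 / (2 * C^4)))" .
  have "?P1 \<le> 2 * exp (-2 * (n * (\<theta> * \<sigma>))\<^sup>2 / (n * ((C * \<sigma> - \<mu>) - (- (C * \<sigma>) - \<mu>))\<^sup>2))"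
    unfolding M_def
    using Hoeffding_PiM_components[OF Q _ moments(3) _ J(1,2) J0, where \<epsilon> = "real n * (\<theta> * \<sigma>)"]
      measurable moments(1) J C \<sigma> \<theta>
    by simp
  also have "\<dots> = 2 * exp (- (n * \<theta>\<^sup>2 / (2 * C\<^sup>2)))"
    using J(4) \<sigma> C by (simp add: power2_eq_square field_simps)
  finally show "?P1 \<le> 2 * exp (- (n * \<theta>\<^sup>2 / (2 * C\<^sup>2)))" .
qed

lemma sample_var_concentration:
  fixes Q :: "'a measure" and \<phi> :: "'a \<Rightarrow> real" and I J :: "'b set" and n :: nat and C \<theta> :: real
  defines "\<sigma> \<equiv> sd Q \<phi>" and "M \<equiv> PiM I (\<lambda>_. Q)"
    and "p \<equiv> 2 * exp (- (n * \<theta>\<^sup>2 / (2 * C^4))) + 2 * exp (- (n * \<theta>\<^sup>2 / (2 * C\<^sup>2)))"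
  assumes Q: "prob_space Q" and \<phi>: "\<phi> \<in> borel_measurable Q" and \<sigma>: "\<sigma> > 0"
    and bound: "AE x in Q. \<bar>\<phi> x\<bar> \<le> C * \<sigma>"
    and J: "finite J" "J \<subseteq> I" "card J = n" "n \<ge> 2" and \<theta>: "\<theta> > 0"
  shows "\<exists>E\<in>sets M. measure M E \<le> p \<and>
    (\<forall>y\<in>space M - E.
      n / (real n - 1) * (1 - (2 * \<theta> + \<theta>\<^sup>2)) * \<sigma>\<^sup>2 \<le> sample_var J (\<lambda>t. \<phi> (y t)) \<and>
      sample_var J (\<lambda>t. \<phi> (y t)) \<le> n / (real n - 1) * (1 + (2 * \<theta> + \<theta>\<^sup>2)) * \<sigma>\<^sup>2)"
proof -
  define \<mu> where "\<mu> = (\<integral>x. \<phi> x \<partial>Q)"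
  define S2 S1 where "S2 y = (\<Sum>t\<in>J. (\<phi> (y t) - \<mu>)\<^sup>2)" and "S1 y = (\<Sum>t\<in>J. \<phi> (y t) - \<mu>)" for y
  define Ea Eb where "Ea = {y \<in> space M. real n * (2 * \<theta> * \<sigma>\<^sup>2) \<le> \<bar>S2 y - real n * \<sigma>\<^sup>2\<bar>}"
    and "Eb = {y \<in> space M. real n * (\<theta> * \<sigma>) \<le> \<bar>S1 y\<bar>}"
  have "(\<lambda>y. \<Sum>t\<in>J. g (y t)) \<in> borel_measurable M"
    if "g \<in> borel_measurable Q" for g :: "'a \<Rightarrow> real"
    unfolding M_def using J(2) that
    by (intro borel_measurable_sum) (auto intro: measurable_compose[OF measurable_component_singleton])
  then have events: "Ea \<in> sets M" "Eb \<in> sets M"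
    unfolding Ea_def Eb_def S1_def S2_def using \<phi> by measurable
  have "measure M (Ea \<union> Eb) \<le> measure M Ea + measure M Eb"
    using events by (rule measure_Un_le)
  also have "\<dots> \<le> p"
    unfolding Ea_def Eb_def S1_def S2_def M_def \<mu>_def \<sigma>_def p_def using J \<theta>
    by (intro add_mono centered_sums_deviation[OF Q \<phi> \<sigma>[unfolded \<sigma>_def] bound[unfolded \<sigma>_def]]) auto
  finally have "measure M (Ea \<union> Eb) \<le> p" .
  moreover have "sample_var J (\<lambda>t. \<phi> (y t)) = (S2 y - (S1 y)\<^sup>2 / n) / (real n - 1)" for y
    unfolding S1_def S2_def using sample_var_shift[OF J(1)] J(3) by simp
  then have "n / (real n - 1) * (1 - (2 * \<theta> + \<theta>\<^sup>2)) * \<sigma>\<^sup>2 \<le> sample_var J (\<lambda>t. \<phi> (y t)) \<and>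
      sample_var J (\<lambda>t. \<phi> (y t)) \<le> n / (real n - 1) * (1 + (2 * \<theta> + \<theta>\<^sup>2)) * \<sigma>\<^sup>2"
    if "y \<in> space M - (Ea \<union> Eb)" for y
    using that J(4) centered_sums_bounds[of n "S2 y" \<sigma> \<theta> "S1 y"]
    by (auto simp: Ea_def Eb_def divide_right_mono)
  ultimately show ?thesis
    using events by (intro bexI[of _ "Ea \<union> Eb"]) auto
qed

section \<open>The expected proxy mean squared error\<close>

lemma (in prob_space) nn_integral_le_good_event:
  assumes E: "E \<in> events" "prob E \<le> p"
    and good: "\<And>y. y \<in> space M - E \<Longrightarrow> G y \<le> A" and bad: "\<And>y. y \<in> space M \<Longrightarrow> G y \<le> B"
    and "0 \<le> A" "0 \<le> B"
  shows "(\<integral>\<^sup>+y. ennreal (G y) \<partial>M) \<le> ennreal (A + B * p)"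
proof -
  have "(\<integral>\<^sup>+y. ennreal (G y) \<partial>M) \<le> (\<integral>\<^sup>+y. ennreal A + ennreal B * indicator E y \<partial>M)"
  proof (rule nn_integral_mono)
    fix y assume "y \<in> space M"
    then have "G y \<le> A + B * indicator E y"
      using good bad[of y] \<open>0 \<le> A\<close> by (cases "y \<in> E") auto
    then have "ennreal (G y) \<le> ennreal (A + B * indicator E y)"
      by (rule ennreal_leI)
    also have "\<dots> = ennreal A + ennreal B * indicator E y"
      using \<open>0 \<le> A\<close> \<open>0 \<le> B\<close> by (simp add: ennreal_plus ennreal_mult' indicator_def)
    finally show "ennreal (G y) \<le> ennreal A + ennreal B * indicator E y" .
  qed
  also have "\<dots> = ennreal A + ennreal B * ennreal (prob E)"
    using E by (simp add: nn_integral_add nn_integral_cmult_indicator emeasure_eq_measure prob_space)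
  also have "\<dots> \<le> ennreal A + ennreal B * ennreal p"
    using E by (intro add_left_mono mult_left_mono ennreal_leI) auto
  also have "\<dots> = ennreal (A + B * p)"
  proof -
    have "0 \<le> p"
      using E(2) measure_nonneg[of M E] by linarith
    then show ?thesis
      using \<open>0 \<le> A\<close> \<open>0 \<le> B\<close> by (simp add: ennreal_plus ennreal_mult)
  qed
  finally show ?thesis .
qed

lemma integral_pmf_pair_le:
  fixes F :: "'a \<times> 'b \<Rightarrow> real"
  assumes M: "prob_space M" and F: "\<And>\<omega>. 0 \<le> F \<omega>" and "0 \<le> c"
    and bound: "\<And>x. x \<in> set_pmf p \<Longrightarrow> (\<integral>\<^sup>+y. ennreal (F (x, y)) \<partial>M) \<le> ennreal c"
  shows "(\<integral>\<omega>. F \<omega> \<partial>(measure_pmf p \<Otimes>\<^sub>M M)) \<le> c"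
proof (cases "integrable (measure_pmf p \<Otimes>\<^sub>M M) F")
  case True
  interpret M: prob_space M
    by (rule M)
  have [measurable]: "F \<in> borel_measurable (measure_pmf p \<Otimes>\<^sub>M M)"
    using True by (rule borel_measurable_integrable)
  have "(\<integral>\<^sup>+\<omega>. ennreal (F \<omega>) \<partial>(measure_pmf p \<Otimes>\<^sub>M M)) =
      (\<integral>\<^sup>+x. \<integral>\<^sup>+y. ennreal (F (x, y)) \<partial>M \<partial>measure_pmf p)"
    by (rule M.nn_integral_fst[symmetric]) measurable
  also have "\<dots> \<le> (\<integral>\<^sup>+x. ennreal c \<partial>measure_pmf p)"
    using bound by (intro nn_integral_mono_AE) (simp add: AE_measure_pmf_iff)
  also have "\<dots> = ennreal c"
    by (simp add: measure_pmf.emeasure_space_1)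
  finally show ?thesis
    using True F \<open>0 \<le> c\<close> by (subst integral_eq_nn_integral) (auto intro: enn2real_leI)
qed (simp add: not_integrable_integral_eq \<open>0 \<le> c\<close>)

lemma continuous_borel_measurable_of_sets_eq:
  assumes "sets Q = sets (borel :: 'b::topological_space measure)" "continuous_on UNIV f"
  shows "f \<in> borel_measurable Q"
  unfolding measurable_cong_sets[OF assms(1) refl] by (rule borel_measurable_continuous_onI[OF assms(2)])

lemma admissible_one_le: "admissible C Q \<Longrightarrow> 1 \<le> C"
  unfolding admissible_def
  by (auto intro!: prob_space.one_le_of_AE_abs_le_sd[of Q fst]
      continuous_borel_measurable_of_sets_eq continuous_on_fst[OF continuous_on_id] elim: AE_mp)

lemma stage1_good_event:
  fixes Q :: "(real \<times> real) measure" and C \<theta> :: real and n :: nat and S :: "nat set"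
  defines "M \<equiv> PiM {..<2*n} (\<lambda>_. Q)" and "k \<equiv> real n / (real n - 1)" and "d \<equiv> 2 * \<theta> + \<theta>\<^sup>2"
    and "p \<equiv> 2 * exp (- (n * \<theta>\<^sup>2 / (2 * C^4))) + 2 * exp (- (n * \<theta>\<^sup>2 / (2 * C\<^sup>2)))"
  assumes Q: "admissible C Q" and S: "S \<subseteq> {..<2*n}" "card S = n" and n: "n \<ge> 2" and \<theta>: "\<theta> > 0"
  shows "\<exists>E\<in>sets M. measure M E \<le> 2 * p \<and> (\<forall>y\<in>space M - E.
    k * (1 - d) * (sd Q fst)\<^sup>2 \<le> sample_var S (\<lambda>t. fst (y t)) \<and>
    sample_var S (\<lambda>t. fst (y t)) \<le> k * (1 + d) * (sd Q fst)\<^sup>2 \<and>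
    k * (1 - d) * (sd Q snd)\<^sup>2 \<le> sample_var ({..<2*n} - S) (\<lambda>t. snd (y t)) \<and>
    sample_var ({..<2*n} - S) (\<lambda>t. snd (y t)) \<le> k * (1 + d) * (sd Q snd)\<^sup>2)"
proof -
  have prob: "prob_space Q" and sets: "sets Q = sets borel" and \<sigma>: "sd Q fst > 0" "sd Q snd > 0"
    and bound: "AE x in Q. \<bar>fst x\<bar> \<le> C * sd Q fst" "AE x in Q. \<bar>snd x\<bar> \<le> C * sd Q snd"
    using Q by (auto simp: admissible_def elim: AE_mp)
  have S1: "finite S"
    using S(1) finite_subset by blast
  have S0: "finite ({..<2*n} - S)" "{..<2*n} - S \<subseteq> {..<2*n}" "card ({..<2*n} - S) = n"
    using S S1 by (auto simp: card_Diff_subset)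
  note measurable = continuous_borel_measurable_of_sets_eq[OF sets continuous_on_fst[OF continuous_on_id]]
    continuous_borel_measurable_of_sets_eq[OF sets continuous_on_snd[OF continuous_on_id]]
  from sample_var_concentration[OF prob measurable(1) \<sigma>(1) bound(1) S1 S n \<theta>]
  obtain E1 where E1: "E1 \<in> sets M" "measure M E1 \<le> p"
    and good1: "\<And>y. y \<in> space M - E1 \<Longrightarrow>
        k * (1 - d) * (sd Q fst)\<^sup>2 \<le> sample_var S (\<lambda>t. fst (y t)) \<and>
        sample_var S (\<lambda>t. fst (y t)) \<le> k * (1 + d) * (sd Q fst)\<^sup>2"
    unfolding M_def k_def p_def d_def by auto
  from sample_var_concentration[OF prob measurable(2) \<sigma>(2) bound(2) S0 n \<theta>]
  obtain E0 where E0: "E0 \<in> sets M" "measure M E0 \<le> p"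
    and good0: "\<And>y. y \<in> space M - E0 \<Longrightarrow>
        k * (1 - d) * (sd Q snd)\<^sup>2 \<le> sample_var ({..<2*n} - S) (\<lambda>t. snd (y t)) \<and>
        sample_var ({..<2*n} - S) (\<lambda>t. snd (y t)) \<le> k * (1 + d) * (sd Q snd)\<^sup>2"
    unfolding M_def k_def p_def d_def by auto
  have "measure M (E1 \<union> E0) \<le> 2 * p"
    using measure_Un_le[OF E1(1) E0(1)] E1(2) E0(2) by linarith
  then show ?thesis
    using E1(1) E0(1) good1 good0 by (intro bexI[of _ "E1 \<union> E0"]) auto
qed

lemma two_stage_mse_nn_integral_le:
  fixes Q :: "(real \<times> real) measure" and C T \<beta> \<theta> :: real and n :: nat and S :: "nat set"
  defines "\<rho> \<equiv> \<beta> * sqrt T / (2 * T)" and "d \<equiv> 2 * \<theta> + \<theta>\<^sup>2"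
    and "V \<equiv> (sd Q fst + sd Q snd)\<^sup>2 / T"
    and "p \<equiv> 2 * exp (- (n * \<theta>\<^sup>2 / (2 * C^4))) + 2 * exp (- (n * \<theta>\<^sup>2 / (2 * C\<^sup>2)))"
  assumes Q: "admissible C Q" and S: "S \<subseteq> {..<2*n}" "card S = n" and n: "n \<ge> 2"
    and T: "T > 0" "0 < \<beta> * sqrt T" "\<beta> * sqrt T \<le> T" and \<theta>: "\<theta> > 0" "d\<^sup>2 \<le> 3/5"
  shows "(\<integral>\<^sup>+y. ennreal (case two_stage_alloc T \<beta> (hat_sd1 (S, y)) (hat_sd0 n (S, y)) of (t1, t0) \<Rightarrow>
      proxy_mse (sd Q fst) (sd Q snd) t1 t0) \<partial>PiM {..<2*n} (\<lambda>_. Q))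
    \<le> ennreal (V * (1 + max (d\<^sup>2 / 2) (\<rho> / (1 - \<rho>))) + V / \<rho> * (2 * p))"
proof -
  define M where "M = PiM {..<2*n} (\<lambda>_. Q)"
  define k where "k = real n / (real n - 1)"
  interpret M: prob_space M
    unfolding M_def using Q by (intro prob_space_PiM) (simp add: admissible_def)
  have \<sigma>: "sd Q fst > 0" "sd Q snd > 0"
    using Q by (simp_all add: admissible_def)
  obtain E where E: "E \<in> M.events" "M.prob E \<le> 2 * p"
    and good: "\<And>y. y \<in> space M - E \<Longrightarrow>
      k * (1 - d) * (sd Q fst)\<^sup>2 \<le> sample_var S (\<lambda>t. fst (y t)) \<and>
      sample_var S (\<lambda>t. fst (y t)) \<le> k * (1 + d) * (sd Q fst)\<^sup>2 \<and>
      k * (1 - d) * (sd Q snd)\<^sup>2 \<le> sample_var ({..<2*n} - S) (\<lambda>t. snd (y t)) \<and>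
      sample_var ({..<2*n} - S) (\<lambda>t. snd (y t)) \<le> k * (1 + d) * (sd Q snd)\<^sup>2"
    using stage1_good_event[OF Q S n \<theta>(1)] unfolding M_def k_def d_def p_def by blast
  have "0 \<le> V" "0 < \<rho>"
    using T by (simp_all add: V_def \<rho>_def)
  then have "0 \<le> V * (1 + max (d\<^sup>2 / 2) (\<rho> / (1 - \<rho>)))" "0 \<le> V / \<rho>"
    by (auto intro!: mult_nonneg_nonneg add_nonneg_nonneg max.coboundedI1)
  moreover have "k > 0" "0 \<le> d"
    using n \<theta>(1) by (simp_all add: k_def d_def)
  ultimately show ?thesis
    unfolding M_def[symmetric]
  proof (intro M.nn_integral_le_good_event[OF E])
    fix y assume "y \<in> space M - E"
    then show "(case two_stage_alloc T \<beta> (hat_sd1 (S, y)) (hat_sd0 n (S, y)) of (t1, t0) \<Rightarrow>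
        proxy_mse (sd Q fst) (sd Q snd) t1 t0) \<le> V * (1 + max (d\<^sup>2 / 2) (\<rho> / (1 - \<rho>)))"
      unfolding hat_sd1_def hat_sd0_def V_def \<rho>_def fst_conv snd_conv
      using good \<open>k > 0\<close> \<open>0 \<le> d\<close> \<theta>(2)
      by (intro two_stage_mse_le_of_estimates[OF T \<sigma>, where k = k]) auto
  next
    fix y
    show "(case two_stage_alloc T \<beta> (hat_sd1 (S, y)) (hat_sd0 n (S, y)) of (t1, t0) \<Rightarrow>
        proxy_mse (sd Q fst) (sd Q snd) t1 t0) \<le> V / \<rho>"
      unfolding V_def \<rho>_def by (rule two_stage_mse_le[OF T \<sigma>])
  qed
qed

lemma expected_V_le:
  fixes Q :: "(real \<times> real) measure" and C T \<beta> \<theta> :: real and n :: nat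
  defines "\<rho> \<equiv> \<beta> * sqrt T / (2 * T)" and "d \<equiv> 2 * \<theta> + \<theta>\<^sup>2"
    and "V \<equiv> (sd Q fst + sd Q snd)\<^sup>2 / T"
    and "p \<equiv> 2 * exp (- (n * \<theta>\<^sup>2 / (2 * C^4))) + 2 * exp (- (n * \<theta>\<^sup>2 / (2 * C\<^sup>2)))"
  assumes Q: "admissible C Q" and n: "n \<ge> 2"
    and T: "T > 0" "0 < \<beta> * sqrt T" "\<beta> * sqrt T \<le> T" and \<theta>: "\<theta> > 0" "d\<^sup>2 \<le> 3/5"
  shows "expected_V T \<beta> n Q \<le> V * (1 + max (d\<^sup>2 / 2) (\<rho> / (1 - \<rho>)) + 2 * p / \<rho>)"
proof -
  define SS where "SS = {S. S \<subseteq> {..<2*n} \<and> card S = n}"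
  have "finite SS"
    unfolding SS_def by (rule finite_subset[of _ "Pow {..<2*n}"]) auto
  moreover have "{..<n} \<in> SS"
    unfolding SS_def by auto
  ultimately have support: "set_pmf (pmf_of_set SS) = SS"
    by (intro set_pmf_of_set) auto
  have prob: "prob_space (PiM {..<2*n} (\<lambda>_. Q))"
    using Q by (intro prob_space_PiM) (simp add: admissible_def)
  have "0 \<le> V" "0 < \<rho>"
    using T by (simp_all add: V_def \<rho>_def)
  then have bound_nonneg: "0 \<le> V * (1 + max (d\<^sup>2 / 2) (\<rho> / (1 - \<rho>))) + V / \<rho> * (2 * p)"
    by (auto intro!: mult_nonneg_nonneg add_nonneg_nonneg max.coboundedI1 simp: p_def)
  have "V * (1 + max (d\<^sup>2 / 2) (\<rho> / (1 - \<rho>))) + V / \<rho> * (2 * p) =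
      V * (1 + max (d\<^sup>2 / 2) (\<rho> / (1 - \<rho>)) + 2 * p / \<rho>)"
    by (simp add: algebra_simps)
  moreover have "expected_V T \<beta> n Q \<le> V * (1 + max (d\<^sup>2 / 2) (\<rho> / (1 - \<rho>))) + V / \<rho> * (2 * p)"
    unfolding expected_V_def stage1_space_def SS_def[symmetric]
  proof (rule integral_pmf_pair_le)
    fix S assume "S \<in> set_pmf (pmf_of_set SS)"
    then have "S \<in> SS"
      by (simp only: support)
    then have "S \<subseteq> {..<2*n}" "card S = n"
      by (auto simp: SS_def)
    then show "(\<integral>\<^sup>+y. ennreal (case two_stage_alloc T \<beta> (hat_sd1 (S, y)) (hat_sd0 n (S, y)) of (t1, t0) \<Rightarrow>
        proxy_mse (sd Q fst) (sd Q snd) t1 t0) \<partial>PiM {..<2*n} (\<lambda>_. Q))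
      \<le> ennreal (V * (1 + max (d\<^sup>2 / 2) (\<rho> / (1 - \<rho>))) + V / \<rho> * (2 * p))"
      unfolding V_def \<rho>_def d_def p_def
      by (rule two_stage_mse_nn_integral_le[OF Q _ _ n T \<theta>(1) \<theta>(2)[unfolded d_def]])
  qed (use prob bound_nonneg two_stage_mse_nonneg[OF T] in auto)
  ultimately show ?thesis
    by simp
qed

section \<open>The choice of the tuning parameter\<close>

lemma ln_le_half: "0 < y \<Longrightarrow> ln y \<le> y / (2::real)"
proof -
  assume y: "0 < y"
  have "ln (y / exp 1) \<le> y / exp 1 - 1"
    using y by (intro ln_le_minus_one) simp
  then have "ln y \<le> y / exp 1"
    using y by (simp add: ln_div)
  also have "\<dots> \<le> y / 2"
    using y exp_ge_add_one_self[of 1] by (intro divide_left_mono) auto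
  finally show ?thesis .
qed

lemma pow4_mult_ln_le:
  fixes C T :: real
  assumes C: "0 < C" and T: "320 powr (5/4) * C ^ 5 \<le> T" and L: "0 \<le> ln T"
  shows "C^4 * ln T \<le> T / 128"
proof -
  have T0: "T > 0"
    using T C by (smt (verit) powr_gt_zero zero_less_power mult_pos_pos)
  have "(C^5) powr (4/5) = (C powr 5) powr (4/5)"
    using C by simp
  also have "\<dots> = C powr (5 * (4/5))"
    by (rule powr_powr)
  also have "\<dots> = C^4"
    using C by simp
  finally have "C^4 = (C^5) powr (4/5)" ..
  also have "\<dots> \<le> (T / 320 powr (5/4)) powr (4/5)"
    using T C by (intro powr_mono2) (simp_all add: field_simps)
  also have "\<dots> = T powr (4/5) / 320"
    by (simp add: powr_divide powr_powr)
  finally have C4: "C^4 \<le> T powr (4/5) / 320" .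
  have "ln T = 5 * ln (T powr (1/5))"
    using T0 by (simp add: ln_powr)
  also have "\<dots> \<le> 5/2 * T powr (1/5)"
    using T0 ln_le_half[of "T powr (1/5)"] by simp
  finally have "C^4 * ln T \<le> (T powr (4/5) / 320) * (5/2 * T powr (1/5))"
    using C4 L C by (intro mult_mono) auto
  also have "\<dots> = T / 128"
    using T0 by (simp add: powr_add[symmetric])
  finally show ?thesis .
qed

lemma tuning_parameter_rate:
  fixes C T \<beta> :: real and n :: nat
  defines "\<kappa> \<equiv> C\<^sup>2 * sqrt (ln T) / sqrt T"
  assumes C: "0 < C" and T: "320 powr (5/4) * C ^ 5 \<le> T"
    and \<beta>: "\<beta> = 4 * C\<^sup>2 * sqrt (ln T)" and n: "real n = \<beta> / 2 * sqrt T"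
  shows "0 < T" "0 \<le> \<kappa>" "\<kappa> \<le> 9/100" "\<kappa>\<^sup>2 * T = C^4 * ln T"
    and "\<beta> * sqrt T = 4 * \<kappa> * T" "real n = 2 * \<kappa> * T"
proof -
  show T0: "0 < T"
    using C T by (smt (verit) powr_gt_zero zero_less_power mult_pos_pos)
  \<comment> \<open>For small C the bound on T does not give ln T \<ge> 0; that comes from n being a natural.\<close>
  then have "0 \<le> \<beta>"
    using n by (smt (verit) divide_less_0_iff mult_neg_pos of_nat_0_le_iff real_sqrt_gt_zero)
  then have L: "0 \<le> ln T"
    using C \<beta> by (simp add: zero_le_mult_iff)
  then show "0 \<le> \<kappa>" and \<kappa>2: "\<kappa>\<^sup>2 * T = C^4 * ln T"
    using T0 by (simp_all add: \<kappa>_def power_divide power_mult_distrib flip: power_mult)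
  have "\<kappa>\<^sup>2 * T \<le> 1/128 * T"
    using pow4_mult_ln_le[OF C T L] \<kappa>2 by simp
  then have "\<kappa>\<^sup>2 \<le> (9/100)\<^sup>2"
    using T0 by (simp add: power2_eq_square)
  then show "\<kappa> \<le> 9/100"
    by (rule power2_le_imp_le) simp
  show "\<beta> * sqrt T = 4 * \<kappa> * T" "real n = 2 * \<kappa> * T"
    using T0 \<beta> n by (simp_all add: \<kappa>_def field_simps)
qed

lemma two_le_ln_of_ge:
  fixes C T :: real
  assumes "1 \<le> C" "320 powr (5/4) * C ^ 5 \<le> T"
  shows "2 \<le> ln T"
proof -
  have "exp 2 = exp 1 * (exp 1 :: real)"
    by (simp flip: exp_add)
  also have "\<dots> \<le> 3 * 3"
    using exp_le by (intro mult_mono) auto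
  also have "\<dots> \<le> 320 powr (5/4) * C^5"
    using assms(1) powr_mono[of 1 "5/4" 320] one_le_power[of C 5] mult_mono[of 320 "320 powr (5/4)" 1 "C^5"]
    by simp
  finally have "exp 2 \<le> T"
    using assms(2) by linarith
  then show ?thesis
    by (simp add: ln_ge_iff less_le_trans[OF exp_gt_zero])
qed

(* The first term bounds the excess on the good event (estimation error d^2/2 with
   d = 2 sqrt kappa + kappa, clipping 2 kappa / (1 - 2 kappa)); the second is the probability
   of the bad event divided by rho = 2 kappa. *)
definition excess_bound :: "real \<Rightarrow> real \<Rightarrow> real \<Rightarrow> real" where
  "excess_bound C T \<kappa> = max ((2 * sqrt \<kappa> + \<kappa>)\<^sup>2 / 2) (2 * \<kappa> / (1 - 2 * \<kappa>)) +
     (2 * exp (- (\<kappa>\<^sup>2 * T / C^4)) + 2 * exp (- (\<kappa>\<^sup>2 * T / C\<^sup>2))) / \<kappa>"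

lemma two_sqrt_add_square_le:
  fixes \<kappa> :: real
  assumes "0 \<le> \<kappa>" "\<kappa> \<le> 9/100"
  shows "(2 * sqrt \<kappa> + \<kappa>)\<^sup>2 \<le> 529/100 * \<kappa>"
proof -
  define \<theta> where "\<theta> = sqrt \<kappa>"
  have \<theta>: "\<theta>\<^sup>2 = \<kappa>" "0 \<le> \<theta>"
    using assms(1) by (simp_all add: \<theta>_def)
  then have "\<theta>\<^sup>2 \<le> (3/10)\<^sup>2"
    using assms(2) by (simp add: power2_eq_square)
  then have "\<theta> \<le> 3/10"
    by (rule power2_le_imp_le) simp
  then have "(2 + \<theta>)\<^sup>2 \<le> (23/10)\<^sup>2"
    using \<theta>(2) by (intro power_mono) auto
  moreover have "(2 * sqrt \<kappa> + \<kappa>)\<^sup>2 = \<kappa> * (2 + \<theta>)\<^sup>2"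
    using \<theta>(1) by (simp add: \<theta>_def[symmetric] power2_eq_square algebra_simps)
  ultimately have "(2 * sqrt \<kappa> + \<kappa>)\<^sup>2 \<le> \<kappa> * (23/10)\<^sup>2"
    using assms(1) by (metis mult_left_mono)
  then show ?thesis
    by (simp add: power2_eq_square)
qed

lemma excess_bound_lt:
  fixes C T \<kappa> :: real
  assumes C: "1 \<le> C" and T: "0 < T" "2 \<le> ln T"
    and \<kappa>: "0 \<le> \<kappa>" "\<kappa> \<le> 9/100" "\<kappa>\<^sup>2 * T = C^4 * ln T"
  shows "excess_bound C T \<kappa> < 5 * \<kappa>"
proof -
  have large: "2 \<le> \<kappa>\<^sup>2 * T"
    unfolding \<kappa>(3) using C T(2) mult_mono[of 1 "C^4" 2 "ln T"] by (simp add: one_le_power)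
  then have \<kappa>0: "0 < \<kappa>"
    using \<kappa>(1) by (cases "\<kappa> = 0") auto
  have "2 * \<kappa> / (1 - 2 * \<kappa>) \<le> 27/10 * \<kappa>"
    using \<kappa>0 \<kappa>(2) by (simp add: field_simps)
  moreover have "(2 * sqrt \<kappa> + \<kappa>)\<^sup>2 / 2 \<le> 27/10 * \<kappa>"
    using two_sqrt_add_square_le[OF \<kappa>(1,2)] \<kappa>(1) by linarith
  ultimately have clipping: "max ((2 * sqrt \<kappa> + \<kappa>)\<^sup>2 / 2) (2 * \<kappa> / (1 - 2 * \<kappa>)) \<le> 27/10 * \<kappa>"
    by simp
  have "C\<^sup>2 \<le> C^4"
    using C by (intro power_increasing) auto
  then have "\<kappa>\<^sup>2 * T / C^4 \<le> \<kappa>\<^sup>2 * T / C\<^sup>2"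
    using C large by (intro divide_left_mono) auto
  then have "exp (- (\<kappa>\<^sup>2 * T / C\<^sup>2)) \<le> exp (- (\<kappa>\<^sup>2 * T / C^4))"
    by simp
  then have "(2 * exp (- (\<kappa>\<^sup>2 * T / C^4)) + 2 * exp (- (\<kappa>\<^sup>2 * T / C\<^sup>2))) / \<kappa> \<le> 4 / T / \<kappa>"
    using C T(1) \<kappa>0 by (intro divide_right_mono) (simp_all add: \<kappa>(3) exp_minus inverse_eq_divide)
  also have "\<dots> = 4 * \<kappa> / (\<kappa>\<^sup>2 * T)"
    using \<kappa>0 by (simp add: power2_eq_square)
  also have "\<dots> \<le> 4 * \<kappa> / 2"
    using \<kappa>0 large by (intro divide_left_mono) auto
  finally show ?thesis
    using clipping \<kappa>0 unfolding excess_bound_def by linarith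
qed

lemma expected_V_ratio_le:
  fixes C T \<beta> \<kappa> :: real and n :: nat
  assumes Q: "admissible C Q" and T: "0 < T" "2 \<le> ln T"
    and \<kappa>: "0 \<le> \<kappa>" "\<kappa> \<le> 9/100" "\<kappa>\<^sup>2 * T = C^4 * ln T"
    and \<beta>: "\<beta> * sqrt T = 4 * \<kappa> * T" and n: "real n = 2 * \<kappa> * T"
  shows "expected_V T \<beta> n Q / ((sd Q fst + sd Q snd)\<^sup>2 / T) \<le> 1 + excess_bound C T \<kappa>"
proof -
  have "1 * 2 \<le> C^4 * ln T"
    using admissible_one_le[OF Q] T(2) by (intro mult_mono) (auto simp: one_le_power)
  then have \<kappa>0: "0 < \<kappa>"
    using \<kappa>(1,3) by (cases "\<kappa> = 0") auto
  have "\<kappa>\<^sup>2 \<le> \<kappa>"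
    using \<kappa>(1,2) mult_right_mono[of \<kappa> 1 \<kappa>] by (simp add: power2_eq_square)
  then have "\<kappa>\<^sup>2 * T \<le> \<kappa> * T"
    using T(1) by (intro mult_right_mono) auto
  then have n2: "2 \<le> n"
    using n \<kappa>(3) \<open>1 * 2 \<le> C^4 * ln T\<close> by linarith
  have \<theta>: "0 < sqrt \<kappa>" "(sqrt \<kappa>)\<^sup>2 = \<kappa>" "(2 * sqrt \<kappa> + (sqrt \<kappa>)\<^sup>2)\<^sup>2 \<le> 3/5"
    using \<kappa>0 two_sqrt_add_square_le[OF \<kappa>(1,2)] \<kappa>(2) by simp_all
  have params: "\<beta> * sqrt T / (2 * T) = 2 * \<kappa>"
    "real n * \<kappa> / (2 * C^4) = \<kappa>\<^sup>2 * T / C^4" "real n * \<kappa> / (2 * C\<^sup>2) = \<kappa>\<^sup>2 * T / C\<^sup>2"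
    using T(1) unfolding \<beta> n by (simp_all add: power2_eq_square)
  have feasible: "0 < \<beta> * sqrt T" "\<beta> * sqrt T \<le> T"
    using \<kappa>0 \<kappa>(2) T(1) unfolding \<beta> by simp_all
  have "0 < (sd Q fst + sd Q snd)\<^sup>2 / T"
    using Q T by (simp add: admissible_def)
  moreover have "expected_V T \<beta> n Q \<le> (sd Q fst + sd Q snd)\<^sup>2 / T *
      (1 + max ((2 * sqrt \<kappa> + \<kappa>)\<^sup>2 / 2) (2 * \<kappa> / (1 - 2 * \<kappa>)) +
        2 * (2 * exp (- (\<kappa>\<^sup>2 * T / C^4)) + 2 * exp (- (\<kappa>\<^sup>2 * T / C\<^sup>2))) / (2 * \<kappa>))"
    using expected_V_le[OF Q n2 T(1) feasible \<theta>(1,3)] unfolding \<theta>(2) params .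
  moreover have "\<dots> = (sd Q fst + sd Q snd)\<^sup>2 / T * (1 + excess_bound C T \<kappa>)"
    unfolding excess_bound_def mult_divide_mult_cancel_left_if by simp
  ultimately show ?thesis
    by (metis pos_divide_le_eq mult.commute)
qed

theorem corollary1:
  fixes C T \<beta> :: real and n :: nat
  assumes "0 < C"
    and "T \<ge> 320 powr (5/4) * C ^ 5"
    and "\<beta> = 4 * C\<^sup>2 * sqrt (ln T)"
    and "real n = \<beta> / 2 * sqrt T"
  shows "\<beta> * sqrt T \<le> T \<and>
    (SUP Q \<in> {Q. admissible C Q}.
       ereal (expected_V T \<beta> n Q / ((sd Q fst + sd Q snd)\<^sup>2 / T)))
      < ereal (1 + 5 * C\<^sup>2 * T powr (-1/2) * sqrt (ln T))"
proof -
  define \<kappa> where "\<kappa> = C\<^sup>2 * sqrt (ln T) / sqrt T"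
  note rate = tuning_parameter_rate[OF assms, folded \<kappa>_def]
  have "\<beta> * sqrt T \<le> T"
    using mult_right_mono[of "4 * \<kappa>" 1 T] rate(1,3,5) by simp
  moreover have rate_eq: "5 * C\<^sup>2 * T powr (-1/2) * sqrt (ln T) = 5 * \<kappa>"
    using rate(1) by (simp add: \<kappa>_def powr_minus_divide powr_half_sqrt)
  moreover have "(SUP Q \<in> {Q. admissible C Q}. ereal (expected_V T \<beta> n Q / ((sd Q fst + sd Q snd)\<^sup>2 / T)))
      < ereal (1 + 5 * \<kappa>)"
  proof (cases "\<exists>Q. admissible C Q")
    case True
    then have C: "1 \<le> C"
      using admissible_one_le by blast
    then have "2 \<le> ln T"
      using assms(2) by (rule two_le_ln_of_ge)
    then have "(SUP Q \<in> {Q. admissible C Q}. ereal (expected_V T \<beta> n Q / ((sd Q fst + sd Q snd)\<^sup>2 / T)))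
        \<le> ereal (1 + excess_bound C T \<kappa>)"
      using expected_V_ratio_le[OF _ rate(1) _ rate(2-6)] by (intro SUP_least) simp
    also have "\<dots> < ereal (1 + 5 * \<kappa>)"
      using excess_bound_lt[OF C rate(1) \<open>2 \<le> ln T\<close> rate(2-4)] by simp
    finally show ?thesis .
  qed (simp add: bot_ereal_def)
  ultimately show ?thesis
    unfolding rate_eq by blast
qed

end
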